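(* Let $m,n\ge1$ be integers, $A=(a_{ij})$ an $n\times m$ real matrix, $0<\delta<1$ real and $s>1$ an integer. Suppose there is an $m$-tuple of integers $s_1,\dots,s_m$ with $$s=\max_j|s_j|>2^{\frac{(m+n-1)n}{4m}}\left(\frac{n\delta^2}{m}\right)^{\frac{n}{2(m+n)}}\quad\text{and}\quad \max_i\|s_1a_{i1}+\dots+s_ma_{im}\|\le\delta s^{-\frac{m}{n}}.$$ Then applying the ILLL-algorithm to $A$ with $$q_{\max}\ge 2^{\frac{m^2+m(n-1)+4n}{4m}}\left(\frac{m}{n\delta^2}\right)^{\frac{n}{2(m+n)}}s$$ yields an $m$-tuple $q_1,\dots,q_m$ with $$\max_j|q_j|\le 2^{\frac{m^2+m(n-1)+4n}{4m}}\left(\frac{m}{n\delta^2}\right)^{\frac{n}{2(m+n)}}s\quad\text{and}\quad \max_i\|q_1a_{i1}+\dots+q_ma_{im}\|\le 2^{\frac{m+n}{2}}\sqrt n\,\delta s^{-\frac{m}{n}}.$$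
   Context: $\|x\|$ denotes the distance from $x\in\mathbb R$ to the nearest integer. A basis $b_1,\dots,b_r$ of $\mathbb R^r$ with Gram–Schmidt vectors $b_i^*=b_i-\sum_{j<i}\mu_{ij}b_j^*$, $\mu_{ij}=(b_i,b_j^* )/(b_j^*,b_j^* )$, is reduced if $|\mu_{ij}|\le\frac12$ ($j<i$) and $|b_i^*+\mu_{i,i-1}b_{i-1}^*|^2\ge\frac34|b_{i-1}^*|^2$ ($1<i\le r$); the LLL-algorithm returns a reduced basis of the lattice generated by its input basis. The ILLL-algorithm on input $A$ and $q_{\max}>1$: put $k'=\left\lceil -\frac{(m+n-1)(m+n)}{4n}+\frac{m\log_2 q_{\max}}{n}\right\rceil$ and, for $k\ge1$, $c(k)=\left(2^{-\frac{m+n+3}{4}-k+1}\right)^{\frac{m+n}{m}}$. Start with the basis given by the columns of $B=\begin{pmatrix} I_n & A\\ 0& c(1)I_m\end{pmatrix}$. In iteration $k=1,\dots,k'$: apply the LLL-algorithm to the current basis; from the first vector of the reduced basis, which has the form $(q_1a_{11}+\dots+q_ma_{1m}-p_1,\dots,q_1a_{n1}+\dots+q_ma_{nm}-p_n,c(k)q_1,\dots,c(k)q_m)^T$ with $p_i,q_j\in\mathbb Z$, output the $m$-tuple $q(k)=(q_1,\dots,q_m)$; then divide the last $m$ coordinates of all basis vectors by $2^{\frac{m+n}{m}}$. The $m$-tuples returned by the algorithm are $q(1),\dots,q(k')$. *)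

theory Defs
  imports Complex_Main
begin

(* Vectors of R^r are functions nat => real, only coordinates t < r matter.
   A family of r vectors (a basis) is nat => (nat => real), indices 0..r-1
   (the paper's b_1..b_r correspond to indices 0..r-1). *)

definition dist_int :: "real \<Rightarrow> real" where
  "dist_int x = (INF z::int. \<bar>x - real_of_int z\<bar>)"

definition ip :: "nat \<Rightarrow> (nat \<Rightarrow> real) \<Rightarrow> (nat \<Rightarrow> real) \<Rightarrow> real" where
  "ip r u v = (\<Sum>t<r. u t * v t)"

primrec gsl :: "nat \<Rightarrow> (nat \<Rightarrow> nat \<Rightarrow> real) \<Rightarrow> nat \<Rightarrow> (nat \<Rightarrow> real) list" where
  "gsl r b 0 = []"
| "gsl r b (Suc i) = gsl r b i @
     [(\<lambda>t. b i t - (\<Sum>j<i. (ip r (b i) (gsl r b i ! j) / ip r (gsl r b i ! j) (gsl r b i ! j))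
                            * (gsl r b i ! j) t))]"

definition gs :: "nat \<Rightarrow> (nat \<Rightarrow> nat \<Rightarrow> real) \<Rightarrow> nat \<Rightarrow> nat \<Rightarrow> real" where
  "gs r b i = gsl r b (Suc i) ! i"

definition gs_mu :: "nat \<Rightarrow> (nat \<Rightarrow> nat \<Rightarrow> real) \<Rightarrow> nat \<Rightarrow> nat \<Rightarrow> real" where
  "gs_mu r b i j = ip r (b i) (gs r b j) / ip r (gs r b j) (gs r b j)"

definition lattice_of :: "nat \<Rightarrow> (nat \<Rightarrow> nat \<Rightarrow> real) \<Rightarrow> (nat \<Rightarrow> real) set" where
  "lattice_of r b = {v. \<exists>z::nat \<Rightarrow> int. \<forall>t<r. v t = (\<Sum>i<r. real_of_int (z i) * b i t)}"

(* b_0..b_{r-1} is a basis of R^r (linearly independent, i.e. all b_i^* nonzero) *)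
definition is_basis :: "nat \<Rightarrow> (nat \<Rightarrow> nat \<Rightarrow> real) \<Rightarrow> bool" where
  "is_basis r b = (\<forall>i<r. \<exists>t<r. gs r b i t \<noteq> 0)"

definition reduced :: "nat \<Rightarrow> (nat \<Rightarrow> nat \<Rightarrow> real) \<Rightarrow> bool" where
  "reduced r b \<longleftrightarrow> is_basis r b \<and>
     (\<forall>i<r. \<forall>j<i. \<bar>gs_mu r b i j\<bar> \<le> 1/2) \<and>
     (\<forall>i. 0 < i \<and> i < r \<longrightarrow>
        ip r (\<lambda>t. gs r b i t + gs_mu r b i (i-1) * gs r b (i-1) t)
             (\<lambda>t. gs r b i t + gs_mu r b i (i-1) * gs r b (i-1) t)
        \<ge> 3/4 * ip r (gs r b (i-1)) (gs r b (i-1)))"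

definition ILLL_c :: "nat \<Rightarrow> nat \<Rightarrow> nat \<Rightarrow> real" where
  "ILLL_c m n k = (2 powr (- (real m + real n + 3) / 4 - real k + 1)) powr ((real m + real n) / real m)"

definition ILLL_kmax :: "nat \<Rightarrow> nat \<Rightarrow> real \<Rightarrow> int" where
  "ILLL_kmax m n qmax = \<lceil>- ((real m + real n - 1) * (real m + real n)) / (4 * real n)
                          + real m * log 2 qmax / real n\<rceil>"

(* initial basis: columns of [[I_n, A],[0, c(1) I_m]]; A i j for i<n, j<m *)
definition ILLL_init :: "nat \<Rightarrow> nat \<Rightarrow> (nat \<Rightarrow> nat \<Rightarrow> real) \<Rightarrow> nat \<Rightarrow> nat \<Rightarrow> real" where
  "ILLL_init m n A i t =
     (if i < n then (if t = i then 1 else 0)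
      else (if t < n then A t (i - n) else (if t - n = i - n then ILLL_c m n 1 else 0)))"

definition ILLL_scale :: "nat \<Rightarrow> nat \<Rightarrow> (nat \<Rightarrow> nat \<Rightarrow> real) \<Rightarrow> nat \<Rightarrow> nat \<Rightarrow> real" where
  "ILLL_scale m n b i t = (if t < n then b i t else b i t / 2 powr ((real m + real n) / real m))"

(* R is a run of the ILLL-algorithm on A, qmax: R k is the reduced basis returned by
   the LLL-algorithm in iteration k (1 <= k <= k'), any reduced basis of the lattice
   generated by the current basis. *)
definition ILLL_run :: "nat \<Rightarrow> nat \<Rightarrow> (nat \<Rightarrow> nat \<Rightarrow> real) \<Rightarrow> real \<Rightarrow> (nat \<Rightarrow> nat \<Rightarrow> nat \<Rightarrow> real) \<Rightarrow> bool" where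
  "ILLL_run m n A qmax R \<longleftrightarrow>
     (\<forall>k::nat. 1 \<le> k \<and> int k \<le> ILLL_kmax m n qmax \<longrightarrow>
        reduced (m + n) (R k) \<and>
        lattice_of (m + n) (R k) =
          lattice_of (m + n) (if k = 1 then ILLL_init m n A else ILLL_scale m n (R (k - 1))))"

definition ILLL_output :: "nat \<Rightarrow> nat \<Rightarrow> (nat \<Rightarrow> nat \<Rightarrow> real) \<Rightarrow> (nat \<Rightarrow> nat \<Rightarrow> nat \<Rightarrow> real)
     \<Rightarrow> nat \<Rightarrow> (nat \<Rightarrow> int) \<Rightarrow> bool" where
  "ILLL_output m n A R k q \<longleftrightarrow>
     (\<exists>p::nat \<Rightarrow> int.
        (\<forall>i<n. R k 0 i = (\<Sum>j<m. real_of_int (q j) * A i j) - real_of_int (p i)) \<and>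
        (\<forall>j<m. R k 0 (n + j) = ILLL_c m n k * real_of_int (q j)))"

end

theory Submission
  imports Defs "HOL-Analysis.Convex" "Jordan_Normal_Form.Determinant"
begin

text \<open>
  Put r = m + n. In iteration k the LLL-algorithm reduces a basis of the lattice of all vectors
  (qA - p, c(k) q), whose determinant is c(k)^m. The first vector b of a reduced basis satisfies
  |b|^r \<le> 2^(r(r-1)/4) det, and c(k) is chosen so that this reads |b| \<le> 2^(-k); as the last
  coordinates of b are c(k) q_j, this bounds q. Also |b|^2 \<le> 2^(r-1) |v|^2 for the lattice vector
  v = (sA - round(sA), c(k) s) coming from the given approximation s. Taking for k the first
  iteration in which the last m coordinates of v no longer dominate its length gives
  |v|^2 \<le> 2 n \<delta>^2 s^(-2m/n), which bounds the distances of qA to the integers. The lower bound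
  on s makes k \<ge> 1, the lower bound on q_max makes k \<le> k'.
\<close>

section \<open>Gram--Schmidt orthogonalisation\<close>

lemma length_gsl [simp]: "length (gsl r b i) = i"
  by (induction i) auto

lemma gsl_nth: "i < j \<Longrightarrow> gsl r b j ! i = gs r b i"
  by (induction j) (auto simp: nth_append gs_def less_Suc_eq)

lemma gs_eq: "gs r b i t = b i t - (\<Sum>j<i. gs_mu r b i j * gs r b j t)"
proof -
  have "gs r b i t = b i t - (\<Sum>j<i. (ip r (b i) (gsl r b i ! j) / ip r (gsl r b i ! j) (gsl r b i ! j))
                                    * (gsl r b i ! j) t)"
    unfolding gs_def by (simp only: gsl.simps nth_append length_gsl) simp
  also have "\<dots> = b i t - (\<Sum>j<i. gs_mu r b i j * gs r b j t)"
    unfolding gs_mu_def by (intro arg_cong2[where f="(-)"] refl sum.cong) (simp_all add: gsl_nth)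
  finally show ?thesis .
qed

lemma basis_vec_eq_gs_sum: "b i t = gs r b i t + (\<Sum>j<i. gs_mu r b i j * gs r b j t)"
  using gs_eq[of r b i t] by simp

lemma gs_0: "gs r b 0 = b 0"
  by (rule ext) (use gs_eq[of r b 0] in simp)

lemma ip_commute: "ip r u v = ip r v u"
  unfolding ip_def by (simp add: mult.commute)

lemma ip_diff_sum_left:
  "ip r (\<lambda>t. u t - (\<Sum>l\<in>L. a l * w l t)) v = ip r u v - (\<Sum>l\<in>L. a l * ip r (w l) v)"
  unfolding ip_def
  by (simp add: algebra_simps sum_subtractf sum_distrib_left sum_distrib_right sum.swap[of _ L])

lemma ip_add_sum_left:
  "ip r (\<lambda>t. u t + (\<Sum>l\<in>L. a l * w l t)) v = ip r u v + (\<Sum>l\<in>L. a l * ip r (w l) v)"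
  unfolding ip_def
  by (simp add: algebra_simps sum.distrib sum_distrib_left sum_distrib_right sum.swap[of _ L])

lemma ip_self_nonneg: "0 \<le> ip r u u"
  unfolding ip_def by (simp add: sum_nonneg)

lemma ip_self_eq_0D: "ip r u u = 0 \<Longrightarrow> t < r \<Longrightarrow> u t = 0"
  unfolding ip_def by (simp add: sum_nonneg_eq_0_iff)

lemma coord_sq_le_ip: "t < r \<Longrightarrow> (u t)\<^sup>2 \<le> ip r u u"
  unfolding ip_def power2_eq_square by (rule member_le_sum) auto

lemma abs_coord_le_sqrt_ip: "t < r \<Longrightarrow> \<bar>u t\<bar> \<le> sqrt (ip r u u)"
  using coord_sq_le_ip[of t r u] real_le_rsqrt[of "\<bar>u t\<bar>"] by simp

lemma gs_orthogonal: "j < i \<Longrightarrow> ip r (gs r b i) (gs r b j) = 0"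
proof (induction i arbitrary: j rule: less_induct)
  case (less i)
  have other: "gs_mu r b i l * ip r (gs r b l) (gs r b j) = 0" if "l < i" "l \<noteq> j" for l
  proof (cases "l < j")
    case True
    then have "ip r (gs r b j) (gs r b l) = 0" using less.IH less.prems by blast
    then show ?thesis by (simp add: ip_commute)
  next
    case False
    then have "j < l" using that by simp
    then show ?thesis using less.IH that by simp
  qed
  have "gs r b i = (\<lambda>t. b i t - (\<Sum>l<i. gs_mu r b i l * gs r b l t))"
    by (rule ext) (rule gs_eq)
  then have "ip r (gs r b i) (gs r b j)
      = ip r (b i) (gs r b j) - (\<Sum>l<i. gs_mu r b i l * ip r (gs r b l) (gs r b j))"
    by (simp only: ip_diff_sum_left)
  also have "(\<Sum>l<i. gs_mu r b i l * ip r (gs r b l) (gs r b j))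
      = gs_mu r b i j * ip r (gs r b j) (gs r b j)"
    using less.prems by (subst sum.remove[of _ j]) (auto simp: other)
  also have "ip r (b i) (gs r b j) - \<dots> = 0"
  proof (cases "ip r (gs r b j) (gs r b j) = 0")
    case True
    then have "ip r (b i) (gs r b j) = 0"
      unfolding ip_def using ip_self_eq_0D[OF True] by simp
    then show ?thesis using True by simp
  qed (simp add: gs_mu_def)
  finally show ?case .
qed

lemma ip_basis_vec_gs:
  assumes "i \<le> k"
  shows "ip r (b i) (gs r b k) = ip r (gs r b i) (gs r b k)"
proof -
  have "b i = (\<lambda>t. gs r b i t + (\<Sum>j<i. gs_mu r b i j * gs r b j t))"
    by (rule ext) (rule basis_vec_eq_gs_sum)
  then have "ip r (b i) (gs r b k)
      = ip r (gs r b i) (gs r b k) + (\<Sum>j<i. gs_mu r b i j * ip r (gs r b j) (gs r b k))"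
    by (simp add: ip_add_sum_left)
  moreover have "ip r (gs r b j) (gs r b k) = 0" if "j < i" for j
    using that assms gs_orthogonal[of j k r b] by (simp add: ip_commute)
  ultimately show ?thesis by simp
qed

lemma is_basis_gs_pos: "is_basis r b \<Longrightarrow> k < r \<Longrightarrow> 0 < ip r (gs r b k) (gs r b k)"
  unfolding is_basis_def using ip_self_eq_0D ip_self_nonneg by (metis order_le_less)

lemma gs_norm_le_lattice_vec:
  assumes B: "is_basis r b" and v: "\<forall>t<r. v t = (\<Sum>i<r. real_of_int (z i) * b i t)"
    and k: "k < r" and "z k \<noteq> 0" and z_above: "\<forall>i. k < i \<and> i < r \<longrightarrow> z i = 0"
  shows "ip r (gs r b k) (gs r b k) \<le> ip r v v"
proof -
  let ?g = "ip r (gs r b k) (gs r b k)"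
  have g_pos: "0 < ?g" using is_basis_gs_pos[OF B k] .
  have "ip r v (gs r b k) = (\<Sum>t<r. (\<Sum>i<r. real_of_int (z i) * b i t) * gs r b k t)"
    unfolding ip_def using v by (intro sum.cong) auto
  also have "\<dots> = (\<Sum>i<r. real_of_int (z i) * ip r (b i) (gs r b k))"
    unfolding ip_def sum_distrib_left sum_distrib_right by (subst sum.swap) (simp add: algebra_simps)
  also have "\<dots> = (\<Sum>i\<in>{k}. real_of_int (z i) * ip r (b i) (gs r b k))"
  proof (rule sum.mono_neutral_right)
    show "\<forall>i\<in>{..<r} - {k}. real_of_int (z i) * ip r (b i) (gs r b k) = 0"
    proof
      fix i assume i: "i \<in> {..<r} - {k}"
      show "real_of_int (z i) * ip r (b i) (gs r b k) = 0"
      proof (cases "i < k")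
        case True
        then show ?thesis
          using ip_basis_vec_gs[of i k r b] gs_orthogonal[of i k r b] by (simp add: ip_commute)
      next
        case False
        then show ?thesis using z_above i by auto
      qed
    qed
  qed (use k in auto)
  also have "\<dots> = real_of_int (z k) * ?g" by (simp add: ip_basis_vec_gs)
  finally have vg: "ip r v (gs r b k) = real_of_int (z k) * ?g" .
  have "(real_of_int (z k))\<^sup>2 * ?g * ?g \<le> ip r v v * ?g"
    using Cauchy_Schwarz_ineq_sum[of v "gs r b k" "{..<r}"] vg
    unfolding ip_def by (simp add: power2_eq_square algebra_simps)
  then have vv: "(real_of_int (z k))\<^sup>2 * ?g \<le> ip r v v" using g_pos by simp
  have "1 \<le> \<bar>real_of_int (z k)\<bar>"
    using \<open>z k \<noteq> 0\<close> by (metis of_int_1_le_iff of_int_abs zero_less_abs_iff int_one_le_iff_zero_less)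
  then have "1 \<le> (real_of_int (z k))\<^sup>2"
    using one_le_power[of "\<bar>real_of_int (z k)\<bar>" 2] by simp
  then have "?g \<le> (real_of_int (z k))\<^sup>2 * ?g"
    using mult_right_mono[of 1 _ ?g] g_pos by simp
  with vv show ?thesis by linarith
qed

section \<open>Reduced bases\<close>

lemma reduced_gs_norm_step:
  assumes R: "reduced r b" and i: "0 < i" "i < r"
  shows "ip r (gs r b (i - 1)) (gs r b (i - 1)) \<le> 2 * ip r (gs r b i) (gs r b i)"
proof -
  let ?mu = "gs_mu r b i (i - 1)" and ?g = "gs r b i" and ?h = "gs r b (i - 1)"
  have lovasz: "3/4 * ip r ?h ?h \<le> ip r (\<lambda>t. ?g t + ?mu * ?h t) (\<lambda>t. ?g t + ?mu * ?h t)"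
    and size: "\<bar>?mu\<bar> \<le> 1/2"
    using R i unfolding reduced_def by auto
  have "ip r (\<lambda>t. ?g t + ?mu * ?h t) (\<lambda>t. ?g t + ?mu * ?h t)
      = ip r ?g ?g + 2 * ?mu * ip r ?g ?h + ?mu\<^sup>2 * ip r ?h ?h"
    unfolding ip_def by (simp add: algebra_simps sum.distrib sum_distrib_left power2_eq_square)
  moreover have "ip r ?g ?h = 0" using gs_orthogonal[of "i - 1" i r b] i by simp
  ultimately have expand: "ip r (\<lambda>t. ?g t + ?mu * ?h t) (\<lambda>t. ?g t + ?mu * ?h t)
      = ip r ?g ?g + ?mu\<^sup>2 * ip r ?h ?h"
    by simp
  have "?mu\<^sup>2 \<le> 1/4"
    using power_mono[OF size, of 2] by (simp add: power2_eq_square)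
  then have "?mu\<^sup>2 * ip r ?h ?h \<le> 1/4 * ip r ?h ?h"
    using ip_self_nonneg by (rule mult_right_mono)
  then show ?thesis using lovasz expand by linarith
qed

lemma reduced_first_le_gs_norm:
  assumes R: "reduced r b" and "i < r"
  shows "ip r (b 0) (b 0) \<le> 2 ^ i * ip r (gs r b i) (gs r b i)"
  using \<open>i < r\<close>
proof (induction i)
  case 0
  then show ?case by (simp add: gs_0)
next
  case (Suc i)
  have "ip r (gs r b i) (gs r b i) \<le> 2 * ip r (gs r b (Suc i)) (gs r b (Suc i))"
    using reduced_gs_norm_step[OF R, of "Suc i"] Suc.prems by simp
  then have "2 ^ i * ip r (gs r b i) (gs r b i) \<le> 2 ^ i * (2 * ip r (gs r b (Suc i)) (gs r b (Suc i)))"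
    by (rule mult_left_mono) simp
  moreover have "(2::real) ^ Suc i * ip r (gs r b (Suc i)) (gs r b (Suc i))
      = 2 ^ i * (2 * ip r (gs r b (Suc i)) (gs r b (Suc i)))"
    by simp
  ultimately show ?case using Suc.IH Suc.prems by linarith
qed

lemma reduced_first_short:
  assumes R: "reduced r b" and "v \<in> lattice_of r b" and "\<exists>t<r. v t \<noteq> 0"
  shows "ip r (b 0) (b 0) \<le> 2 ^ (r - 1) * ip r v v"
proof -
  obtain z where z: "\<forall>t<r. v t = (\<Sum>i<r. real_of_int (z i) * b i t)"
    using \<open>v \<in> lattice_of r b\<close> unfolding lattice_of_def by blast
  define K where "K = {i. i < r \<and> z i \<noteq> 0}"
  have "K \<noteq> {}" using z \<open>\<exists>t<r. v t \<noteq> 0\<close> unfolding K_def by force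
  moreover have "finite K" unfolding K_def by simp
  ultimately have k: "Max K < r" "z (Max K) \<noteq> 0"
    using Max_in[of K] unfolding K_def by auto
  have z_above: "\<forall>i. Max K < i \<and> i < r \<longrightarrow> z i = 0"
    using Max_ge[OF \<open>finite K\<close>] unfolding K_def by fastforce
  have B: "is_basis r b" using R unfolding reduced_def by simp
  have "ip r (b 0) (b 0) \<le> 2 ^ Max K * ip r (gs r b (Max K)) (gs r b (Max K))"
    using reduced_first_le_gs_norm[OF R k(1)] .
  also have "\<dots> \<le> 2 ^ Max K * ip r v v"
    using gs_norm_le_lattice_vec[OF B z k z_above] by simp
  also have "\<dots> \<le> 2 ^ (r - 1) * ip r v v"
    using k(1) by (intro mult_right_mono power_increasing ip_self_nonneg) auto
  finally show ?thesis .
qed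

section \<open>Determinants of bases\<close>

definition basis_mat :: "nat \<Rightarrow> (nat \<Rightarrow> nat \<Rightarrow> real) \<Rightarrow> real mat" where
  "basis_mat r b = mat r r (\<lambda>(t, i). b i t)"

lemma scalar_prod_vec [simp]: "vec r f \<bullet> vec r g = (\<Sum>i<r. f i * g i)"
  unfolding scalar_prod_def by (simp add: atLeast0LessThan)

lemma mat_mult_mat_index:
  "i < r \<Longrightarrow> j < r \<Longrightarrow> (mat r r f * mat r r g) $$ (i, j) = (\<Sum>k<r. f (i, k) * g (k, j))"
  by simp

lemma det_basis_mat_sq: "(det (basis_mat r b))\<^sup>2 = (\<Prod>i<r. ip r (gs r b i) (gs r b i))"
proof -
  define G where "G = mat r r (\<lambda>(t, i). gs r b i t)"
  define U where "U = mat r r (\<lambda>(j, i). if j = i then 1 else if j < i then gs_mu r b i j else 0)"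
  have G: "G \<in> carrier_mat r r" and U: "U \<in> carrier_mat r r" by (simp_all add: G_def U_def)
  have BGU: "basis_mat r b = G * U"
  proof (rule eq_matI)
    fix t i assume "t < dim_row (G * U)" "i < dim_col (G * U)"
    then have t: "t < r" and i: "i < r" by (simp_all add: G_def U_def)
    have "(G * U) $$ (t, i) = (\<Sum>j<r. gs r b j t * (if j = i then 1 else if j < i then gs_mu r b i j else 0))"
      unfolding G_def U_def by (simp add: mat_mult_mat_index t i)
    also have "\<dots> = (\<Sum>j\<in>insert i {..<i}. gs r b j t * (if j = i then 1 else if j < i then gs_mu r b i j else 0))"
      by (rule sum.mono_neutral_right) (use i in auto)
    also have "\<dots> = b i t"
      using basis_vec_eq_gs_sum[of b i t] by (simp add: mult.commute)
    finally show "basis_mat r b $$ (t, i) = (G * U) $$ (t, i)"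
      unfolding basis_mat_def using t i by simp
  qed (simp_all add: basis_mat_def G_def U_def)
  have det_U: "det U = 1"
    using det_upper_triangular[OF _ U] unfolding prod_list_diag_prod
    by (auto simp: upper_triangular_def U_def)
  have GtG: "(transpose_mat G * G) $$ (i, j) = ip r (gs r b i) (gs r b j)" if "i < r" "j < r" for i j
    using that unfolding G_def ip_def by simp
  have "upper_triangular (transpose_mat G * G)"
    unfolding upper_triangular_def using GtG gs_orthogonal by (auto simp: G_def)
  have "det G * det G = det (transpose_mat G * G)"
    using det_mult[of "transpose_mat G" r G] G det_transpose[OF G] by simp
  also have "\<dots> = prod_list (diag_mat (transpose_mat G * G))"
    using G \<open>upper_triangular (transpose_mat G * G)\<close> by (intro det_upper_triangular) auto
  also have "\<dots> = (\<Prod>i<r. ip r (gs r b i) (gs r b i))"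
    unfolding prod_list_diag_prod using GtG by (simp add: G_def atLeast0LessThan)
  finally show ?thesis
    using det_mult[OF G U] BGU det_U by (simp add: power2_eq_square)
qed

lemma reduced_first_pow_le_det:
  assumes R: "reduced r b"
  shows "(ip r (b 0) (b 0)) ^ r \<le> 2 ^ (\<Sum>i<r. i) * (det (basis_mat r b))\<^sup>2"
proof -
  have "(ip r (b 0) (b 0)) ^ r = (\<Prod>i<r. ip r (b 0) (b 0))" by simp
  also have "\<dots> \<le> (\<Prod>i<r. 2 ^ i * ip r (gs r b i) (gs r b i))"
    by (rule prod_mono) (auto simp: ip_self_nonneg reduced_first_le_gs_norm[OF R])
  also have "\<dots> = 2 ^ (\<Sum>i<r. i) * (det (basis_mat r b))\<^sup>2"
    by (simp add: prod.distrib power_sum det_basis_mat_sq)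
  finally show ?thesis .
qed

lemma basis_vec_in_lattice:
  assumes "i < r"
  shows "b i \<in> lattice_of r b"
proof -
  have "(\<Sum>j<r. real_of_int (if j = i then 1 else 0) * b j t) = b i t" for t
  proof -
    have "(\<Sum>j<r. real_of_int (if j = i then 1 else 0) * b j t) = (\<Sum>j<r. if j = i then b j t else 0)"
      by (rule sum.cong) auto
    then show ?thesis using assms by (simp add: sum.delta')
  qed
  then show ?thesis
    unfolding lattice_of_def by (intro CollectI exI[of _ "\<lambda>j. if j = i then 1 else 0"] allI impI) simp
qed

lemma lattice_subset_int_comb:
  assumes "lattice_of r b' \<subseteq> lattice_of r b"
  obtains Z where "\<forall>i<r. \<forall>t<r. b' i t = (\<Sum>j<r. real_of_int (Z i j) * b j t)"
proof -
  have "\<forall>i. \<exists>z. i < r \<longrightarrow> (\<forall>t<r. b' i t = (\<Sum>j<r. real_of_int (z j) * b j t))"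
    using basis_vec_in_lattice[of _ r b'] assms unfolding lattice_of_def by blast
  from choice[OF this] obtain Z
    where "\<forall>i. i < r \<longrightarrow> (\<forall>t<r. b' i t = (\<Sum>j<r. real_of_int (Z i j) * b j t))"
    by blast
  then show thesis using that by blast
qed

lemma basis_mat_int_comb:
  assumes "\<forall>i<r. \<forall>t<r. b' i t = (\<Sum>j<r. real_of_int (Z i j) * b j t)"
  shows "basis_mat r b' = basis_mat r b * map_mat real_of_int (mat r r (\<lambda>(j, i). Z i j))"
proof -
  have "map_mat real_of_int (mat r r (\<lambda>(j, i). Z i j)) = mat r r (\<lambda>(j, i). real_of_int (Z i j))"
    by (rule eq_matI) auto
  then show ?thesis
    unfolding basis_mat_def by (auto simp: assms mult.commute intro!: eq_matI)
qed

text \<open>Two bases of the same lattice differ by integer matrices inverse to each other, whose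
  determinants are therefore \<open>\<plusminus>1\<close>.\<close>

lemma det_sq_eq_if_lattice_eq:
  assumes L: "lattice_of r b = lattice_of r b'" and nz: "det (basis_mat r b) \<noteq> 0"
  shows "(det (basis_mat r b'))\<^sup>2 = (det (basis_mat r b))\<^sup>2"
proof -
  obtain Z where Z: "\<forall>i<r. \<forall>t<r. b' i t = (\<Sum>j<r. real_of_int (Z i j) * b j t)"
    using lattice_subset_int_comb[of r b' b] L by auto
  obtain W where W: "\<forall>i<r. \<forall>t<r. b i t = (\<Sum>j<r. real_of_int (W i j) * b' j t)"
    using lattice_subset_int_comb[of r b b'] L by auto
  let ?Z = "mat r r (\<lambda>(j, i). Z i j)" and ?W = "mat r r (\<lambda>(j, i). W i j)"
  have car: "basis_mat r b \<in> carrier_mat r r" "basis_mat r b' \<in> carrier_mat r r"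
    "map_mat real_of_int ?Z \<in> carrier_mat r r" "map_mat real_of_int ?W \<in> carrier_mat r r"
    by (simp_all add: basis_mat_def)
  have dZ: "det (basis_mat r b') = det (basis_mat r b) * real_of_int (det ?Z)"
    using det_mult[OF car(1,3)] basis_mat_int_comb[OF Z] by simp
  have dW: "det (basis_mat r b) = det (basis_mat r b') * real_of_int (det ?W)"
    using det_mult[OF car(2,4)] basis_mat_int_comb[OF W] by simp
  have "det (basis_mat r b) * (real_of_int (det ?Z) * real_of_int (det ?W)) = det (basis_mat r b) * 1"
    using dZ dW by (metis mult.assoc mult_1_right)
  then have "real_of_int (det ?Z * det ?W) = 1" using nz by simp
  then have "det ?Z * det ?W = 1" by linarith
  then have "(det ?Z)\<^sup>2 = 1" using zmult_eq_1_iff by (auto simp: power2_eq_square)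
  then have "(real_of_int (det ?Z))\<^sup>2 = 1" by (metis of_int_1 of_int_power)
  then show ?thesis using dZ by (simp add: power_mult_distrib)
qed

lemma dist_int_le: "dist_int x \<le> \<bar>x - real_of_int z\<bar>"
  unfolding dist_int_def by (rule cINF_lower) (auto intro: bdd_belowI[of _ 0])

lemma abs_diff_round_le: "\<bar>x - real_of_int (round x)\<bar> \<le> \<bar>x - real_of_int z\<bar>"
proof -
  have round: "x - 1/2 < real_of_int (round x)" "real_of_int (round x) \<le> x + 1/2"
    by (rule of_int_round_gt, rule of_int_round_le)
  consider "z \<le> round x - 1" | "z = round x" | "round x + 1 \<le> z" by linarith
  then show ?thesis
  proof cases
    case 1
    then have "real_of_int z \<le> real_of_int (round x) - 1" by linarith
    then show ?thesis using round by linarith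
  next
    case 3
    then have "real_of_int (round x) + 1 \<le> real_of_int z" by linarith
    then show ?thesis using round by linarith
  qed simp
qed

lemma dist_int_eq_round: "dist_int x = \<bar>x - real_of_int (round x)\<bar>"
proof (rule antisym)
  show "\<bar>x - real_of_int (round x)\<bar> \<le> dist_int x"
    unfolding dist_int_def by (rule cINF_greatest) (auto intro: abs_diff_round_le)
qed (rule dist_int_le)

section \<open>The lattices of the ILLL-algorithm\<close>

definition ILLL_lattice :: "nat \<Rightarrow> nat \<Rightarrow> (nat \<Rightarrow> nat \<Rightarrow> real) \<Rightarrow> real \<Rightarrow> (nat \<Rightarrow> real) set" where
  "ILLL_lattice m n A c = {v. \<exists>q p :: nat \<Rightarrow> int. \<forall>t<m + n.
     v t = (if t < n then (\<Sum>j<m. real_of_int (q j) * A t j) - real_of_int (p t)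
            else c * real_of_int (q (t - n)))}"

definition ILLL_basis :: "nat \<Rightarrow> nat \<Rightarrow> (nat \<Rightarrow> nat \<Rightarrow> real) \<Rightarrow> real \<Rightarrow> nat \<Rightarrow> nat \<Rightarrow> real" where
  "ILLL_basis m n A c i t =
     (if i < n then (if t = i then 1 else 0)
      else (if t < n then A t (i - n) else (if t = i then c else 0)))"

lemma ILLL_init_eq_basis: "ILLL_init m n A = ILLL_basis m n A (ILLL_c m n 1)"
  by (auto simp: fun_eq_iff ILLL_init_def ILLL_basis_def)

lemma sum_lessThan_add: "(\<Sum>i<(n::nat) + m. f i) = (\<Sum>i<n. f i) + (\<Sum>j<m. f (n + j))"
  by (induction m) (simp_all add: add.assoc)

lemma prod_lessThan_add: "(\<Prod>i<(n::nat) + m. f i) = (\<Prod>i<n. f i) * (\<Prod>j<m. f (n + j))"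
  by (induction m) (simp_all add: mult.assoc)

lemma ILLL_basis_comb:
  assumes "t < m + n"
  shows "(\<Sum>i<m + n. real_of_int (z i) * ILLL_basis m n A c i t) =
    (if t < n then real_of_int (z t) + (\<Sum>j<m. real_of_int (z (n + j)) * A t j)
     else real_of_int (z t) * c)"
proof -
  have split: "(\<Sum>i<m + n. real_of_int (z i) * ILLL_basis m n A c i t) =
     (\<Sum>i<n. real_of_int (z i) * ILLL_basis m n A c i t)
     + (\<Sum>j<m. real_of_int (z (n + j)) * ILLL_basis m n A c (n + j) t)"
    using sum_lessThan_add[of _ n m] by (simp add: add.commute)
  show ?thesis
  proof (cases "t < n")
    case True
    have "(\<Sum>i<n. real_of_int (z i) * ILLL_basis m n A c i t) = (\<Sum>i<n. if t = i then real_of_int (z i) else 0)"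
      by (rule sum.cong) (auto simp: ILLL_basis_def)
    then show ?thesis using True unfolding split by (simp add: ILLL_basis_def)
  next
    case False
    have "(\<Sum>i<n. real_of_int (z i) * ILLL_basis m n A c i t) = 0"
      by (rule sum.neutral) (use False in \<open>auto simp: ILLL_basis_def\<close>)
    moreover have "(\<Sum>j<m. real_of_int (z (n + j)) * ILLL_basis m n A c (n + j) t)
        = (\<Sum>j<m. if t - n = j then real_of_int (z (n + j)) * c else 0)"
      by (rule sum.cong) (use False in \<open>auto simp: ILLL_basis_def\<close>)
    moreover have "\<dots> = real_of_int (z t) * c"
      using False assms by (simp add: sum.delta)
    ultimately show ?thesis using False unfolding split by simp
  qed
qed

lemma lattice_ILLL_basis: "lattice_of (m + n) (ILLL_basis m n A c) = ILLL_lattice m n A c"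
proof
  show "lattice_of (m + n) (ILLL_basis m n A c) \<subseteq> ILLL_lattice m n A c"
  proof
    fix v assume "v \<in> lattice_of (m + n) (ILLL_basis m n A c)"
    then obtain z where "\<forall>t<m + n. v t = (\<Sum>i<m + n. real_of_int (z i) * ILLL_basis m n A c i t)"
      unfolding lattice_of_def by blast
    then show "v \<in> ILLL_lattice m n A c"
      unfolding ILLL_lattice_def
      by (intro CollectI exI[of _ "\<lambda>j. z (n + j)"] exI[of _ "\<lambda>t. - z t"])
        (auto simp: ILLL_basis_comb mult.commute)
  qed
next
  show "ILLL_lattice m n A c \<subseteq> lattice_of (m + n) (ILLL_basis m n A c)"
  proof
    fix v assume "v \<in> ILLL_lattice m n A c"
    then obtain q p where qp: "\<forall>t<m + n. v t = (if t < n then (\<Sum>j<m. real_of_int (q j) * A t j)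
        - real_of_int (p t) else c * real_of_int (q (t - n)))"
      unfolding ILLL_lattice_def by blast
    define z where "z i = (if i < n then - p i else q (i - n))" for i
    have "v t = (\<Sum>i<m + n. real_of_int (z i) * ILLL_basis m n A c i t)" if "t < m + n" for t
      unfolding ILLL_basis_comb[OF that] using qp that by (simp add: z_def mult.commute)
    then show "v \<in> lattice_of (m + n) (ILLL_basis m n A c)"
      unfolding lattice_of_def by blast
  qed
qed

lemma det_ILLL_basis: "det (basis_mat (m + n) (ILLL_basis m n A c)) = c ^ m"
proof -
  have B: "basis_mat (m + n) (ILLL_basis m n A c) \<in> carrier_mat (m + n) (m + n)"
    by (simp add: basis_mat_def)
  have "det (basis_mat (m + n) (ILLL_basis m n A c)) = prod_list (diag_mat (basis_mat (m + n) (ILLL_basis m n A c)))"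
    by (rule det_upper_triangular[OF _ B]) (auto simp: upper_triangular_def basis_mat_def ILLL_basis_def)
  also have "\<dots> = (\<Prod>i<n + m. if i < n then 1 else c)"
    unfolding prod_list_diag_prod basis_mat_def atLeast0LessThan
    by (auto simp: ILLL_basis_def add.commute intro!: prod.cong)
  also have "\<dots> = c ^ m" by (simp add: prod_lessThan_add)
  finally show ?thesis .
qed

lemma mem_lattice_ILLL_scale_iff:
  "v \<in> lattice_of (m + n) (ILLL_scale m n b) \<longleftrightarrow>
   (\<lambda>t. if t < n then v t else 2 powr ((real m + real n) / real m) * v t) \<in> lattice_of (m + n) b"
proof -
  define l :: real where "l = 2 powr ((real m + real n) / real m)"
  have "0 < l" unfolding l_def by simp
  have "(\<forall>t<m + n. v t = (\<Sum>i<m + n. real_of_int (z i) * ILLL_scale m n b i t)) \<longleftrightarrow>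
      (\<forall>t<m + n. (if t < n then v t else l * v t) = (\<Sum>i<m + n. real_of_int (z i) * b i t))" for z
  proof -
    have "(\<Sum>i<m + n. real_of_int (z i) * ILLL_scale m n b i t)
        = (if t < n then (\<Sum>i<m + n. real_of_int (z i) * b i t) else (\<Sum>i<m + n. real_of_int (z i) * b i t) / l)"
      for t
      unfolding ILLL_scale_def l_def by (simp add: sum_divide_distrib)
    then show ?thesis using \<open>0 < l\<close> by (auto simp: field_simps)
  qed
  then show ?thesis unfolding lattice_of_def l_def by simp
qed

lemma mem_ILLL_lattice_div_iff:
  assumes "0 < l"
  shows "v \<in> ILLL_lattice m n A (c / l) \<longleftrightarrow>
    (\<lambda>t. if t < n then v t else l * v t) \<in> ILLL_lattice m n A c"
  unfolding ILLL_lattice_def using assms by (auto simp: field_simps cong: if_cong)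

lemma lattice_ILLL_scale:
  assumes "lattice_of (m + n) b = ILLL_lattice m n A c"
  shows "lattice_of (m + n) (ILLL_scale m n b) = ILLL_lattice m n A (c / 2 powr ((real m + real n) / real m))"
  using assms by (simp add: set_eq_iff mem_lattice_ILLL_scale_iff mem_ILLL_lattice_div_iff)

lemma ILLL_c_eq_powr:
  "ILLL_c m n k = 2 powr ((- (real m + real n + 3) / 4 - real k + 1) * ((real m + real n) / real m))"
  unfolding ILLL_c_def by (simp add: powr_powr)

lemma ILLL_c_pos: "0 < ILLL_c m n k"
  unfolding ILLL_c_def by simp

lemma ILLL_c_Suc: "ILLL_c m n (Suc k) = ILLL_c m n k / 2 powr ((real m + real n) / real m)"
proof -
  have "(- (real m + real n + 3) / 4 - real (Suc k) + 1) * ((real m + real n) / real m)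
      = (- (real m + real n + 3) / 4 - real k + 1) * ((real m + real n) / real m) - (real m + real n) / real m"
    by (simp add: algebra_simps)
  then show ?thesis unfolding ILLL_c_eq_powr by (simp add: powr_diff)
qed

lemma ILLL_run_lattice:
  assumes run: "ILLL_run m n A qmax R" and "1 \<le> k" "int k \<le> ILLL_kmax m n qmax"
  shows "lattice_of (m + n) (R k) = ILLL_lattice m n A (ILLL_c m n k)"
  using assms(2,3)
proof (induction k)
  case (Suc k)
  have L: "lattice_of (m + n) (R (Suc k)) =
      lattice_of (m + n) (if k = 0 then ILLL_init m n A else ILLL_scale m n (R k))"
    using run Suc.prems unfolding ILLL_run_def by auto
  show ?case
  proof (cases "k = 0")
    case True
    then show ?thesis using L by (simp add: ILLL_init_eq_basis lattice_ILLL_basis)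
  next
    case False
    then show ?thesis
      using L Suc by (simp add: ILLL_c_Suc lattice_ILLL_scale)
  qed
qed simp

lemma ILLL_run_reduced:
  "ILLL_run m n A qmax R \<Longrightarrow> 1 \<le> k \<Longrightarrow> int k \<le> ILLL_kmax m n qmax \<Longrightarrow> reduced (m + n) (R k)"
  unfolding ILLL_run_def by blast

lemma ILLL_run_det_sq:
  assumes "ILLL_run m n A qmax R" "1 \<le> k" "int k \<le> ILLL_kmax m n qmax"
  shows "(det (basis_mat (m + n) (R k)))\<^sup>2 = ILLL_c m n k ^ (2 * m)"
proof -
  let ?B = "ILLL_basis m n A (ILLL_c m n k)"
  have "lattice_of (m + n) ?B = lattice_of (m + n) (R k)"
    using ILLL_run_lattice[OF assms] by (simp add: lattice_ILLL_basis)
  moreover have "det (basis_mat (m + n) ?B) \<noteq> 0"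
    using ILLL_c_pos[of m n k] by (simp add: det_ILLL_basis)
  ultimately show ?thesis
    using det_sq_eq_if_lattice_eq by (simp add: det_ILLL_basis power_mult[symmetric] mult.commute)
qed

lemma sum_lessThan_id: "real (\<Sum>i<r. i) = real r * (real r - 1) / 2"
  by (induction r) (simp_all add: field_simps)

lemma ILLL_c_pow_balance:
  assumes "1 \<le> m"
  shows "(2::real) ^ (\<Sum>i<m + n. i) * ILLL_c m n k ^ (2 * m) = (2 powr (- 2 * real k)) ^ (m + n)"
proof -
  let ?r = "real m + real n" and ?e = "(- (real m + real n + 3) / 4 - real k + 1) * ((real m + real n) / real m)"
  have "(2::real) ^ (\<Sum>i<m + n. i) = 2 powr real (\<Sum>i<m + n. i)"
    by (rule powr_realpow[symmetric]) simp
  also have "\<dots> = 2 powr (?r * (?r - 1) / 2)"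
    by (simp only: sum_lessThan_id of_nat_add)
  moreover have "ILLL_c m n k ^ (2 * m) = 2 powr (real (2 * m) * ?e)"
    unfolding ILLL_c_eq_powr by (rule powr_power) simp
  ultimately have "(2::real) ^ (\<Sum>i<m + n. i) * ILLL_c m n k ^ (2 * m)
      = 2 powr (?r * (?r - 1) / 2 + real (2 * m) * ?e)"
    by (simp only: powr_add)
  also have "?r * (?r - 1) / 2 + real (2 * m) * ?e = real (m + n) * (- 2 * real k)"
    using assms by (simp add: field_simps)
  also have "(2::real) powr (real (m + n) * (- 2 * real k)) = (2 powr (- 2 * real k)) ^ (m + n)"
    by (rule powr_power[symmetric]) simp
  finally show ?thesis .
qed

lemma ILLL_run_first_norm_le:
  assumes run: "ILLL_run m n A qmax R" and "1 \<le> m" and k: "1 \<le> k" "int k \<le> ILLL_kmax m n qmax"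
  shows "sqrt (ip (m + n) (R k 0) (R k 0)) \<le> 2 powr (- real k)"
proof -
  let ?b = "R k 0"
  have "(ip (m + n) ?b ?b) ^ (m + n) \<le> 2 ^ (\<Sum>i<m + n. i) * ILLL_c m n k ^ (2 * m)"
    using reduced_first_pow_le_det[OF ILLL_run_reduced[OF run k]] ILLL_run_det_sq[OF run k] by simp
  also have "\<dots> = (2 powr (- 2 * real k)) ^ (m + n)"
    using ILLL_c_pow_balance[OF \<open>1 \<le> m\<close>] .
  finally have "(ip (m + n) ?b ?b) ^ Suc (m + n - 1) \<le> (2 powr (- 2 * real k)) ^ Suc (m + n - 1)"
    using \<open>1 \<le> m\<close> by simp
  then have "ip (m + n) ?b ?b \<le> 2 powr (- 2 * real k)"
    by (rule power_le_imp_le_base) simp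
  also have "\<dots> = (2 powr (- real k))\<^sup>2"
    by (simp add: power2_eq_square flip: powr_add)
  finally show ?thesis by (simp add: real_le_lsqrt)
qed

lemma ILLL_run_output:
  assumes run: "ILLL_run m n A qmax R" and "1 \<le> m" and k: "1 \<le> k" "int k \<le> ILLL_kmax m n qmax"
  obtains q where "ILLL_output m n A R k q"
    and "\<forall>j<m. real_of_int \<bar>q j\<bar> \<le> 2 powr (- real k) / ILLL_c m n k"
    and "\<forall>i<n. dist_int (\<Sum>j<m. real_of_int (q j) * A i j) \<le> sqrt (ip (m + n) (R k 0) (R k 0))"
proof -
  have "R k 0 \<in> ILLL_lattice m n A (ILLL_c m n k)"
    using basis_vec_in_lattice[of 0 "m + n" "R k"] \<open>1 \<le> m\<close> ILLL_run_lattice[OF run k] by simp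
  then obtain q p where qp: "\<forall>t<m + n. R k 0 t = (if t < n then (\<Sum>j<m. real_of_int (q j) * A t j)
      - real_of_int (p t) else ILLL_c m n k * real_of_int (q (t - n)))"
    unfolding ILLL_lattice_def by blast
  show thesis
  proof
    show "ILLL_output m n A R k q"
      unfolding ILLL_output_def using qp by (intro exI[of _ p]) auto
    show "\<forall>j<m. real_of_int \<bar>q j\<bar> \<le> 2 powr (- real k) / ILLL_c m n k"
    proof (intro allI impI)
      fix j assume "j < m"
      then have "R k 0 (n + j) = ILLL_c m n k * real_of_int (q j)" using qp by simp
      then have "ILLL_c m n k * real_of_int \<bar>q j\<bar> = \<bar>R k 0 (n + j)\<bar>"
        using ILLL_c_pos[of m n k] by (simp add: abs_mult)
      also have "\<dots> \<le> sqrt (ip (m + n) (R k 0) (R k 0))"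
        using \<open>j < m\<close> by (intro abs_coord_le_sqrt_ip) simp
      also have "\<dots> \<le> 2 powr (- real k)"
        by (rule ILLL_run_first_norm_le[OF run \<open>1 \<le> m\<close> k])
      finally show "real_of_int \<bar>q j\<bar> \<le> 2 powr (- real k) / ILLL_c m n k"
        using ILLL_c_pos[of m n k] by (simp add: pos_le_divide_eq mult.commute)
    qed
    show "\<forall>i<n. dist_int (\<Sum>j<m. real_of_int (q j) * A i j) \<le> sqrt (ip (m + n) (R k 0) (R k 0))"
    proof (intro allI impI)
      fix i assume "i < n"
      have "dist_int (\<Sum>j<m. real_of_int (q j) * A i j)
          \<le> \<bar>(\<Sum>j<m. real_of_int (q j) * A i j) - real_of_int (p i)\<bar>"
        by (rule dist_int_le)
      also have "\<dots> = \<bar>R k 0 i\<bar>" using qp \<open>i < n\<close> by simp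
      also have "\<dots> \<le> sqrt (ip (m + n) (R k 0) (R k 0))"
        using \<open>i < n\<close> by (intro abs_coord_le_sqrt_ip) simp
      finally show "dist_int (\<Sum>j<m. real_of_int (q j) * A i j) \<le> sqrt (ip (m + n) (R k 0) (R k 0))" .
    qed
  qed
qed

lemma ip_le_of_abs_le:
  assumes "\<forall>t<n. \<bar>v t\<bar> \<le> \<epsilon>" and "\<forall>l<m. \<bar>v (n + l)\<bar> \<le> C"
  shows "ip (m + n) v v \<le> real n * \<epsilon>\<^sup>2 + real m * C\<^sup>2"
proof -
  have "ip (m + n) v v = (\<Sum>t<n. (v t)\<^sup>2) + (\<Sum>l<m. (v (n + l))\<^sup>2)"
    unfolding ip_def power2_eq_square using sum_lessThan_add[of "\<lambda>t. v t * v t" n m]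
    by (simp add: add.commute)
  also have "(\<Sum>t<n. (v t)\<^sup>2) \<le> (\<Sum>t<n. \<epsilon>\<^sup>2)"
  proof (rule sum_mono)
    fix t assume "t \<in> {..<n}"
    then show "(v t)\<^sup>2 \<le> \<epsilon>\<^sup>2" using assms(1) power_mono[of "\<bar>v t\<bar>" \<epsilon> 2] by simp
  qed
  also have "(\<Sum>l<m. (v (n + l))\<^sup>2) \<le> (\<Sum>l<m. C\<^sup>2)"
  proof (rule sum_mono)
    fix l assume "l \<in> {..<m}"
    then show "(v (n + l))\<^sup>2 \<le> C\<^sup>2" using assms(2) power_mono[of "\<bar>v (n + l)\<bar>" C 2] by simp
  qed
  finally show ?thesis by simp
qed

lemma powr_half_sq: "(2 powr (x / 2))\<^sup>2 = (2::real) powr x"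
  by (simp add: power2_eq_square flip: powr_add)

lemma ILLL_run_first_norm_le_approx:
  assumes run: "ILLL_run m n A qmax R" and "1 \<le> m" and k: "1 \<le> k" "int k \<le> ILLL_kmax m n qmax"
    and "j < m" and "sv j \<noteq> 0" and "0 \<le> \<epsilon>" and sv_le: "\<forall>j<m. real_of_int \<bar>sv j\<bar> \<le> S"
    and approx: "\<forall>i<n. dist_int (\<Sum>j<m. real_of_int (sv j) * A i j) \<le> \<epsilon>"
    and balanced: "real m * (ILLL_c m n k * S)\<^sup>2 \<le> real n * \<epsilon>\<^sup>2"
  shows "sqrt (ip (m + n) (R k 0) (R k 0)) \<le> 2 powr ((real m + real n) / 2) * sqrt (real n) * \<epsilon>"
proof -
  let ?c = "ILLL_c m n k"
  define x where "x i = (\<Sum>j<m. real_of_int (sv j) * A i j)" for i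
  define v where "v t = (if t < n then x t - real_of_int (round (x t)) else ?c * real_of_int (sv (t - n)))" for t
  have "v \<in> lattice_of (m + n) (R k)"
    unfolding ILLL_run_lattice[OF run k] ILLL_lattice_def
    by (intro CollectI exI[of _ sv] exI[of _ "\<lambda>t. round (x t)"]) (simp add: v_def x_def)
  moreover have "\<exists>t<m + n. v t \<noteq> 0"
    using \<open>j < m\<close> \<open>sv j \<noteq> 0\<close> ILLL_c_pos[of m n k] by (intro exI[of _ "n + j"]) (simp add: v_def)
  ultimately have first_short: "ip (m + n) (R k 0) (R k 0) \<le> 2 ^ (m + n - 1) * ip (m + n) v v"
    by (rule reduced_first_short[OF ILLL_run_reduced[OF run k]])
  have "\<forall>t<n. \<bar>v t\<bar> \<le> \<epsilon>"
    using approx by (simp add: v_def x_def dist_int_eq_round)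
  moreover have "\<forall>l<m. \<bar>v (n + l)\<bar> \<le> ?c * S"
    using sv_le ILLL_c_pos[of m n k] by (simp add: v_def abs_mult mult_left_mono)
  ultimately have "ip (m + n) v v \<le> real n * \<epsilon>\<^sup>2 + real m * (?c * S)\<^sup>2"
    by (rule ip_le_of_abs_le)
  then have "ip (m + n) v v \<le> 2 * real n * \<epsilon>\<^sup>2" using balanced by simp
  then have "2 ^ (m + n - 1) * ip (m + n) v v \<le> 2 ^ (m + n - 1) * (2 * real n * \<epsilon>\<^sup>2)"
    by (rule mult_left_mono) simp
  with first_short have "ip (m + n) (R k 0) (R k 0) \<le> 2 ^ (m + n - 1) * (2 * real n * \<epsilon>\<^sup>2)"
    by (rule order_trans)
  also have "\<dots> = 2 ^ (m + n) * real n * \<epsilon>\<^sup>2"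
    using \<open>1 \<le> m\<close> by (simp add: power_diff)
  also have "\<dots> = (2 powr ((real m + real n) / 2) * sqrt (real n) * \<epsilon>)\<^sup>2"
    by (simp add: power_mult_distrib powr_half_sq powr_realpow[symmetric])
  finally show ?thesis using \<open>0 \<le> \<epsilon>\<close> by (simp add: real_le_lsqrt)
qed

section \<open>Choice of the iteration\<close>

text \<open>The real k at which m c(k)^2 S^2 = n \<delta>^2 S^(-2m/n); the iteration used is its ceiling.\<close>

definition ILLL_threshold :: "nat \<Rightarrow> nat \<Rightarrow> real \<Rightarrow> real \<Rightarrow> real" where
  "ILLL_threshold m n \<delta> S = real m / real n * log 2 S - (real m + real n - 1) / 4
     - real m * (log 2 (real n * \<delta>\<^sup>2 / real m) / (2 * (real m + real n)))"

lemma ILLL_threshold_pos: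
  assumes "1 \<le> m" and "1 \<le> n" and "0 < \<delta>" and "0 < S"
    and "S > 2 powr ((real m + real n - 1) * real n / (4 * real m))
              * (real n * \<delta>^2 / real m) powr (real n / (2 * (real m + real n)))"
  shows "0 < ILLL_threshold m n \<delta> S"
proof -
  let ?r = "real m + real n" and ?L = "log 2 (real n * \<delta>\<^sup>2 / real m)"
  define P where "P = 2 powr ((?r - 1) * real n / (4 * real m))
                   * (real n * \<delta>^2 / real m) powr (real n / (2 * ?r))"
  have m: "0 < real m" and n: "0 < real n" using assms(1,2) by simp_all
  \<comment> \<open>Abbreviating \<open>\<omega>\<close> leaves only the denominators \<open>m\<close> and \<open>n\<close> for \<open>field_simps\<close> to clear.\<close>
  define \<omega> where "\<omega> = ?L / (2 * ?r)"
  have log_P: "log 2 P = (?r - 1) * real n / (4 * real m) + real n * \<omega>"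
    unfolding P_def \<omega>_def using m n \<open>0 < \<delta>\<close> by (simp add: log_mult log_powr)
  have T: "ILLL_threshold m n \<delta> S = real m / real n * log 2 S - (?r - 1) / 4 - real m * \<omega>"
    unfolding ILLL_threshold_def \<omega>_def by simp
  have "ILLL_threshold m n \<delta> S = real m / real n * (log 2 S - log 2 P)"
    unfolding T log_P using m n by (simp add: field_simps)
  moreover have "log 2 P < log 2 S"
    using assms m n unfolding P_def by (intro log_less) simp_all
  ultimately show ?thesis using m n by simp
qed

lemma ILLL_c_balanced:
  assumes "1 \<le> m" and "1 \<le> n" and "0 < \<delta>" and "0 < S" and "ILLL_threshold m n \<delta> S \<le> real k"
  shows "real m * (ILLL_c m n k * S)\<^sup>2 \<le> real n * (\<delta> * S powr (- real m / real n))\<^sup>2"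
proof -
  let ?r = "real m + real n" and ?L = "log 2 (real n * \<delta>\<^sup>2 / real m)"
  define e where "e = (- (?r + 3) / 4 - real k + 1) * (?r / real m)"
  have m: "0 < real m" and n: "0 < real n" using assms(1,2) by simp_all
  define \<omega> where "\<omega> = ?L / (2 * ?r)"
  have L: "?L = 2 * ?r * \<omega>" and T: "ILLL_threshold m n \<delta> S = real m / real n * log 2 S - (?r - 1) / 4 - real m * \<omega>"
    unfolding ILLL_threshold_def \<omega>_def using m n by simp_all
  have "(?L - 2 * (real m / real n * log 2 S)) - 2 * (e + log 2 S)
      = 2 * ?r / real m * (real k - ILLL_threshold m n \<delta> S)"
    unfolding T L e_def using m n by (simp add: field_simps)
  moreover have "0 \<le> 2 * ?r / real m * (real k - ILLL_threshold m n \<delta> S)"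
    using assms(5) m n by simp
  moreover have "?L = log 2 (real n) + 2 * log 2 \<delta> - log 2 (real m)"
    using m n \<open>0 < \<delta>\<close> by (simp add: log_divide log_mult log_nat_power)
  moreover have "log 2 (real m * (ILLL_c m n k * S)\<^sup>2) = log 2 (real m) + 2 * (e + log 2 S)"
    using m \<open>0 < S\<close> by (simp add: ILLL_c_eq_powr e_def log_mult log_nat_power)
  moreover have "log 2 (real n * (\<delta> * S powr (- real m / real n))\<^sup>2)
      = log 2 (real n) + 2 * (log 2 \<delta> - real m / real n * log 2 S)"
    using n \<open>0 < \<delta>\<close> \<open>0 < S\<close> by (simp add: log_mult log_nat_power log_powr)
  ultimately have "log 2 (real m * (ILLL_c m n k * S)\<^sup>2) \<le> log 2 (real n * (\<delta> * S powr (- real m / real n))\<^sup>2)"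
    by argo
  then show ?thesis
    using m n \<open>0 < \<delta>\<close> \<open>0 < S\<close> ILLL_c_pos[of m n k] by simp
qed

definition ILLL_q_bound :: "nat \<Rightarrow> nat \<Rightarrow> real \<Rightarrow> real \<Rightarrow> real" where
  "ILLL_q_bound m n \<delta> S = 2 powr ((real m ^ 2 + real m * (real n - 1) + 4 * real n) / (4 * real m))
     * (real m / (real n * \<delta>^2)) powr (real n / (2 * (real m + real n))) * S"

lemma
  assumes "1 \<le> m" and "1 \<le> n" and "0 < \<delta>" and "0 < S"
  shows log_ILLL_q_bound: "log 2 (ILLL_q_bound m n \<delta> S) = (real m + real n - 1) / 4 + real n / real m
      - real n * (log 2 (real n * \<delta>\<^sup>2 / real m) / (2 * (real m + real n))) + log 2 S"
    and ILLL_q_bound_pos: "0 < ILLL_q_bound m n \<delta> S"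
proof -
  let ?r = "real m + real n" and ?L = "log 2 (real n * \<delta>\<^sup>2 / real m)"
  have m: "0 < real m" and n: "0 < real n" using assms(1,2) by simp_all
  have "log 2 (real m / (real n * \<delta>^2)) = - ?L"
    using m n \<open>0 < \<delta>\<close> by (simp add: log_divide)
  moreover have "(real m ^ 2 + real m * (real n - 1) + 4 * real n) / (4 * real m)
      = (?r - 1) / 4 + real n / real m"
    using m by (simp add: field_simps power2_eq_square)
  ultimately show "log 2 (ILLL_q_bound m n \<delta> S) = (?r - 1) / 4 + real n / real m - real n * (?L / (2 * ?r)) + log 2 S"
    unfolding ILLL_q_bound_def using m n \<open>0 < \<delta>\<close> \<open>0 < S\<close> by (simp add: log_mult log_powr)
  show "0 < ILLL_q_bound m n \<delta> S"
    unfolding ILLL_q_bound_def using m n \<open>0 < \<delta>\<close> \<open>0 < S\<close> by simp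
qed

lemma ILLL_c_div_le_q_bound:
  assumes "1 \<le> m" and "1 \<le> n" and "0 < \<delta>" and "0 < S" and "real k < ILLL_threshold m n \<delta> S + 1"
  shows "2 powr (- real k) / ILLL_c m n k \<le> ILLL_q_bound m n \<delta> S"
proof -
  let ?r = "real m + real n" and ?Q = "ILLL_q_bound m n \<delta> S"
  define \<omega> where "\<omega> = log 2 (real n * \<delta>\<^sup>2 / real m) / (2 * ?r)"
  define e where "e = (- (?r + 3) / 4 - real k + 1) * (?r / real m)"
  have m: "0 < real m" and n: "0 < real n" using assms(1,2) by simp_all
  have "log 2 ?Q + real k + e = real n / real m * (ILLL_threshold m n \<delta> S + 1 - real k)"
    unfolding log_ILLL_q_bound[OF assms(1-4)] ILLL_threshold_def e_def \<omega>_def[symmetric]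
    using m n by (simp add: field_simps)
  moreover have "0 \<le> real n / real m * (ILLL_threshold m n \<delta> S + 1 - real k)"
    using assms(5) m n by simp
  ultimately have "2 powr (- real k - e) \<le> 2 powr (log 2 ?Q)"
    by simp
  then show ?thesis
    using ILLL_q_bound_pos[OF assms(1-4)] by (simp add: ILLL_c_eq_powr e_def powr_diff)
qed

lemma le_ILLL_kmax:
  assumes "1 \<le> m" and "1 \<le> n" and "0 < \<delta>" and "0 < S" and "real k < ILLL_threshold m n \<delta> S + 1"
    and "ILLL_q_bound m n \<delta> S \<le> qmax"
  shows "int k \<le> ILLL_kmax m n qmax"
proof -
  let ?r = "real m + real n" and ?Q = "ILLL_q_bound m n \<delta> S"
  define \<omega> where "\<omega> = log 2 (real n * \<delta>\<^sup>2 / real m) / (2 * ?r)"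
  have m: "0 < real m" and n: "0 < real n" using assms(1,2) by simp_all
  have "- ((?r - 1) * ?r) / (4 * real n) + real m * log 2 ?Q / real n = ILLL_threshold m n \<delta> S + 1"
    unfolding log_ILLL_q_bound[OF assms(1-4)] ILLL_threshold_def \<omega>_def[symmetric]
    using m n by (simp add: field_simps)
  then have "real k \<le> - ((?r - 1) * ?r) / (4 * real n) + real m * log 2 ?Q / real n"
    using assms(5) by simp
  also have "\<dots> \<le> - ((?r - 1) * ?r) / (4 * real n) + real m * log 2 qmax / real n"
    using assms(6) ILLL_q_bound_pos[OF assms(1-4)] m n by (simp add: divide_right_mono)
  also have "\<dots> \<le> of_int (ILLL_kmax m n qmax)"
    unfolding ILLL_kmax_def by (rule le_of_int_ceiling)
  finally show ?thesis by simp
qed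

lemma ILLL_good_iteration:
  assumes "1 \<le> m" and "1 \<le> n" and "0 < \<delta>" and "0 < S"
    and "S > 2 powr ((real m + real n - 1) * real n / (4 * real m))
              * (real n * \<delta>^2 / real m) powr (real n / (2 * (real m + real n)))"
    and "ILLL_q_bound m n \<delta> S \<le> qmax"
  obtains k where "1 \<le> k" and "int k \<le> ILLL_kmax m n qmax"
    and "real m * (ILLL_c m n k * S)\<^sup>2 \<le> real n * (\<delta> * S powr (- real m / real n))\<^sup>2"
    and "2 powr (- real k) / ILLL_c m n k \<le> ILLL_q_bound m n \<delta> S"
proof -
  define k where "k = nat \<lceil>ILLL_threshold m n \<delta> S\<rceil>"
  have "0 < ILLL_threshold m n \<delta> S"
    using assms(1-5) by (rule ILLL_threshold_pos)
  then have k: "ILLL_threshold m n \<delta> S \<le> real k" "real k < ILLL_threshold m n \<delta> S + 1" "1 \<le> k"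
    unfolding k_def by linarith+
  show thesis
  proof (rule that)
    show "1 \<le> k" by (fact k(3))
    show "int k \<le> ILLL_kmax m n qmax" by (rule le_ILLL_kmax[OF assms(1-4) k(2) assms(6)])
    show "real m * (ILLL_c m n k * S)\<^sup>2 \<le> real n * (\<delta> * S powr (- real m / real n))\<^sup>2"
      by (rule ILLL_c_balanced[OF assms(1-4) k(1)])
    show "2 powr (- real k) / ILLL_c m n k \<le> ILLL_q_bound m n \<delta> S"
      by (rule ILLL_c_div_le_q_bound[OF assms(1-4) k(2)])
  qed
qed

theorem lemma4:
  fixes m n :: nat and A :: "nat \<Rightarrow> nat \<Rightarrow> real" and \<delta> :: real and s :: int
    and sv :: "nat \<Rightarrow> int" and qmax :: real and R :: "nat \<Rightarrow> nat \<Rightarrow> nat \<Rightarrow> real"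
  assumes "m \<ge> 1" and "n \<ge> 1"
    and "0 < \<delta>" and "\<delta> < 1"
    and "s > 1"
    and "s = Max ((\<lambda>j. \<bar>sv j\<bar>) ` {..<m})"
    and "real_of_int s > 2 powr ((real m + real n - 1) * real n / (4 * real m))
                          * (real n * \<delta>^2 / real m) powr (real n / (2 * (real m + real n)))"
    and "\<forall>i<n. dist_int (\<Sum>j<m. real_of_int (sv j) * A i j)
                \<le> \<delta> * real_of_int s powr (- real m / real n)"
    and "qmax \<ge> 2 powr ((real m ^ 2 + real m * (real n - 1) + 4 * real n) / (4 * real m))
                 * (real m / (real n * \<delta>^2)) powr (real n / (2 * (real m + real n))) * real_of_int s"
    and "ILLL_run m n A qmax R"
  shows "\<exists>k::nat. 1 \<le> k \<and> int k \<le> ILLL_kmax m n qmax \<and>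
           (\<exists>q. ILLL_output m n A R k q \<and>
              (\<forall>j<m. real_of_int \<bar>q j\<bar> \<le>
                 2 powr ((real m ^ 2 + real m * (real n - 1) + 4 * real n) / (4 * real m))
                 * (real m / (real n * \<delta>^2)) powr (real n / (2 * (real m + real n))) * real_of_int s) \<and>
              (\<forall>i<n. dist_int (\<Sum>j<m. real_of_int (q j) * A i j)
                 \<le> 2 powr ((real m + real n) / 2) * sqrt (real n) * \<delta> * real_of_int s powr (- real m / real n)))"
proof -
  let ?S = "real_of_int s" and ?\<epsilon> = "\<delta> * real_of_int s powr (- real m / real n)"
  have S: "0 < ?S" using \<open>s > 1\<close> by simp
  have qmax: "ILLL_q_bound m n \<delta> ?S \<le> qmax" using assms(9) unfolding ILLL_q_bound_def by simp
  obtain k where k: "1 \<le> k" "int k \<le> ILLL_kmax m n qmax"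
    and balanced: "real m * (ILLL_c m n k * ?S)\<^sup>2 \<le> real n * ?\<epsilon>\<^sup>2"
    and scale: "2 powr (- real k) / ILLL_c m n k \<le> ILLL_q_bound m n \<delta> ?S"
    by (rule ILLL_good_iteration[OF assms(1-3) S assms(7) qmax])
  have "(\<lambda>j. \<bar>sv j\<bar>) ` {..<m} \<noteq> {}" using \<open>m \<ge> 1\<close> by (simp add: lessThan_empty_iff)
  then have "s \<in> (\<lambda>j. \<bar>sv j\<bar>) ` {..<m}" unfolding assms(6) by (intro Max_in) simp_all
  then obtain j0 where "j0 < m" "s = \<bar>sv j0\<bar>" by auto
  then have "sv j0 \<noteq> 0" using \<open>s > 1\<close> by auto
  have "\<forall>j<m. \<bar>sv j\<bar> \<le> s" unfolding assms(6) by simp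
  then have "\<forall>j<m. real_of_int \<bar>sv j\<bar> \<le> ?S" by (simp del: of_int_abs)
  from ILLL_run_first_norm_le_approx[OF assms(10,1) k \<open>j0 < m\<close> \<open>sv j0 \<noteq> 0\<close> _ this assms(8) balanced]
  have approx: "sqrt (ip (m + n) (R k 0) (R k 0))
      \<le> 2 powr ((real m + real n) / 2) * sqrt (real n) * \<delta> * ?S powr (- real m / real n)"
    using \<open>0 < \<delta>\<close> by (simp add: mult.assoc)
  obtain q where "ILLL_output m n A R k q"
    and "\<forall>j<m. real_of_int \<bar>q j\<bar> \<le> 2 powr (- real k) / ILLL_c m n k"
    and "\<forall>i<n. dist_int (\<Sum>j<m. real_of_int (q j) * A i j) \<le> sqrt (ip (m + n) (R k 0) (R k 0))"
    by (rule ILLL_run_output[OF assms(10,1) k])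
  with k scale approx show ?thesis
    unfolding ILLL_q_bound_def by (meson order_trans)
qed

end
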